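(* Let $X$ be a set and let $T:\mathcal P(X)\to\mathcal P(X)$ be an order reversing quasi involution. Then there exists a symmetric function $c:X\times X\to\{-1,1\}$ (i.e. $c(x,y)=c(y,x)$ for all $x,y\in X$) such that for every $K\subseteq X$, \[ TK=K^c:=\{y\in X:\ \inf_{x\in K}c(x,y)\ge 0\}. \]
   Context: $\mathcal P(X)$ denotes the power set of $X$. A map $T:\mathcal P(X)\to\mathcal P(X)$ is an order reversing quasi involution if for all $K,L\subseteq X$: (i) $K\subseteq TTK$, and (ii) $L\subseteq K$ implies $TK\subseteq TL$. The infimum over the empty set is $+\infty$, so $\emptyset^c=X$. *)

theory Defs
  imports "HOL-Library.Extended_Real"
begin

definition order_reversing_quasi_involution :: "'a set \<Rightarrow> ('a set \<Rightarrow> 'a set) \<Rightarrow> bool" where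
  "order_reversing_quasi_involution X T \<longleftrightarrow>
     (\<forall>K. K \<subseteq> X \<longrightarrow> T K \<subseteq> X) \<and>
     (\<forall>K. K \<subseteq> X \<longrightarrow> K \<subseteq> T (T K)) \<and>
     (\<forall>K L. K \<subseteq> X \<longrightarrow> L \<subseteq> K \<longrightarrow> T K \<subseteq> T L)"

text \<open>The c-dual set, with infimum taken in the extended reals (inf of empty set is +infinity).\<close>
definition cdual :: "'a set \<Rightarrow> ('a \<Rightarrow> 'a \<Rightarrow> int) \<Rightarrow> 'a set \<Rightarrow> 'a set" where
  "cdual X c K = {y \<in> X. (INF x\<in>K. ereal (real_of_int (c x y))) \<ge> 0}"

end

theory Submission
  imports Defs
begin

text \<open>
  An order reversing quasi involution is determined by its values on singletons:
  antitonicity gives \<open>T K \<subseteq> T {x}\<close> for \<open>x \<in> K\<close>, and conversely, if \<open>y \<in> T {x}\<close> for all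
  \<open>x \<in> K\<close>, then \<open>K \<subseteq> T {y}\<close> because the relation \<open>y \<in> T {x}\<close> is symmetric, whence
  \<open>y \<in> T (T {y}) \<subseteq> T K\<close>. So \<open>c x y = 1\<close> if \<open>y \<in> T {x}\<close> and \<open>c x y = -1\<close> otherwise works.
\<close>

lemma order_reversing_quasi_involutionD:
  assumes "order_reversing_quasi_involution X T" and "K \<subseteq> X"
  shows order_reversing_quasi_involution_subset: "T K \<subseteq> X"
    and order_reversing_quasi_involution_extensive: "K \<subseteq> T (T K)"
    and order_reversing_quasi_involution_antimono: "L \<subseteq> K \<Longrightarrow> T K \<subseteq> T L"
  using assms unfolding order_reversing_quasi_involution_def by meson+

lemma order_reversing_quasi_involution_singleton_sym:
  assumes T: "order_reversing_quasi_involution X T"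
    and "x \<in> X" "y \<in> X" "y \<in> T {x}"
  shows "x \<in> T {y}"
proof -
  have "x \<in> T (T {x})"
    using order_reversing_quasi_involution_extensive[OF T, of "{x}"] \<open>x \<in> X\<close> by simp
  also have "T (T {x}) \<subseteq> T {y}"
  proof (rule order_reversing_quasi_involution_antimono[OF T])
    show "T {x} \<subseteq> X" "{y} \<subseteq> T {x}"
      using order_reversing_quasi_involution_subset[OF T, of "{x}"] \<open>x \<in> X\<close> \<open>y \<in> T {x}\<close> by simp_all
  qed
  finally show ?thesis .
qed

lemma order_reversing_quasi_involution_eq_singletons:
  assumes T: "order_reversing_quasi_involution X T" and K: "K \<subseteq> X"
  shows "T K = {y \<in> X. \<forall>x\<in>K. y \<in> T {x}}"
proof
  have "T K \<subseteq> T {x}" if "x \<in> K" for x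
    using order_reversing_quasi_involution_antimono[OF T K] that by simp
  then show "T K \<subseteq> {y \<in> X. \<forall>x\<in>K. y \<in> T {x}}"
    using order_reversing_quasi_involution_subset[OF T K] by blast
next
  show "{y \<in> X. \<forall>x\<in>K. y \<in> T {x}} \<subseteq> T K"
  proof
    fix y assume y: "y \<in> {y \<in> X. \<forall>x\<in>K. y \<in> T {x}}"
    have "y \<in> T (T {y})"
      using order_reversing_quasi_involution_extensive[OF T, of "{y}"] y by simp
    also have "T (T {y}) \<subseteq> T K"
    proof (rule order_reversing_quasi_involution_antimono[OF T])
      show "T {y} \<subseteq> X"
        using order_reversing_quasi_involution_subset[OF T, of "{y}"] y by simp
      show "K \<subseteq> T {y}"
        using K y order_reversing_quasi_involution_singleton_sym[OF T] by blast
    qed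
    finally show "y \<in> T K" .
  qed
qed

lemma cdual_eq: "cdual X c K = {y \<in> X. \<forall>x\<in>K. 0 \<le> c x y}"
  by (auto simp: cdual_def le_INF_iff)

theorem theorem1p3:
  fixes X :: "'a set" and T :: "'a set \<Rightarrow> 'a set"
  assumes "order_reversing_quasi_involution X T"
  shows "\<exists>c :: 'a \<Rightarrow> 'a \<Rightarrow> int.
           (\<forall>x\<in>X. \<forall>y\<in>X. c x y \<in> {-1, 1}) \<and>
           (\<forall>x\<in>X. \<forall>y\<in>X. c x y = c y x) \<and>
           (\<forall>K. K \<subseteq> X \<longrightarrow> T K = cdual X c K)"
proof (intro exI conjI)
  let ?c = "\<lambda>x y. if y \<in> T {x} then 1 else -1 :: int"
  show "\<forall>x\<in>X. \<forall>y\<in>X. ?c x y \<in> {-1, 1}"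
    by simp
  show "\<forall>x\<in>X. \<forall>y\<in>X. ?c x y = ?c y x"
    using order_reversing_quasi_involution_singleton_sym[OF assms] by fastforce
  show "\<forall>K. K \<subseteq> X \<longrightarrow> T K = cdual X ?c K"
    by (simp add: cdual_eq order_reversing_quasi_involution_eq_singletons[OF assms])
qed

end
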